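(* In Setting S, define for $0\le k\le s$ \[ I(k)=\Big\{(p,q)\in\mathbb Z^2:\ q\ge\sum_{u=0}^rj^u_\ell,\ \ p+a_rq\ge\sum_{t\ne k}i^t_\ell+i^k_1+a_rj^0_\ell+\sum_{u=1}^{r-1}(a_r-a_u)j^u_\ell\Big\}, \] and for $0\le k\le r$, writing $\tilde j^u=j^u_\ell$ for $u\ne k$ and $\tilde j^k=j^k_1$, \[ J(k)=\Big\{(p,q)\in\mathbb Z^2:\ q\ge\sum_{u=0}^r\tilde j^u,\ \ p+a_rq\ge\sum_{t=0}^si^t_\ell+a_r\tilde j^0+\sum_{u=1}^{r-1}(a_r-a_u)\tilde j^u\Big\}. \] If $(p,q)\in U_E:=\bigcup_{k=0}^sI(k)\cup\bigcup_{k=0}^rJ(k)$, then $H^0(X,\widetilde E(p,q))\ne0$; i.e. $U_E\subseteq\mathrm{supp}(\Gamma E)$.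
   Context: Setting S. Fix integers $s,r\ge1$ and $0\le a_1\le\dots\le a_r$. $X=\mathbb P(\mathcal O_{\mathbb P^s}\oplus\mathcal O_{\mathbb P^s}(a_1)\oplus\dots\oplus\mathcal O_{\mathbb P^s}(a_r))$ is the smooth complete toric variety of dimension $s+r$ with $N=\mathbb Z^{s+r}$ (basis $e_1,\dots,e_s,f_1,\dots,f_r$), character lattice $M=\mathbb Z^{s+r}$, and rays $\rho_0=\mathrm{cone}(-e_1-\dots-e_s+a_1f_1+\dots+a_rf_r)$, $\rho_i=\mathrm{cone}(e_i)$ $(1\le i\le s)$, $\eta_0=\mathrm{cone}(-f_1-\dots-f_r)$, $\eta_j=\mathrm{cone}(f_j)$ $(1\le j\le r)$; the maximal cones are spanned by all rays but one $\rho_i$ and one $\eta_j$. For $m=(d_1,\dots,d_{s+r})\in M$: $\langle m,n(\rho_0)\rangle=-d_1-\dots-d_s+a_1d_{s+1}+\dots+a_rd_{s+r}$, $\langle m,n(\rho_i)\rangle=d_i$, $\langle m,n(\eta_0)\rangle=-(d_{s+1}+\dots+d_{s+r})$, $\langle m,n(\eta_j)\rangle=d_{s+j}$. The Cox ring is $R=\mathbb C[x_0,\dots,x_s,y_0,\dots,y_r]$, $\mathbb Z^{s+r+2}$-graded (finest grading) and $\mathrm{Cl}(X)\cong\mathbb Z^2$-graded by $\deg x_i=(1,0)$, $\deg y_0=(0,1)$, $\deg y_j=(-a_j,1)$; $(p,q)$ corresponds to $p[D_{\rho_0}]+q[D_{\eta_0}]$. $E$ is a finitely generated $\mathbb Z^{s+r+2}$-graded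 reflexive $R$-module of rank $\ell$, $\widetilde E$ its (equivariant) sheaf on $X$, $\widetilde E(p,q)$ the sheaf of the shift $E(p,q)$ ($E(p,q)_\alpha=E_{\alpha+(p,q)}$), $\Gamma E=\bigoplus_{(p,q)}H^0(X,\widetilde E(p,q))$, $\mathrm{supp}(\Gamma E)=\{(p,q):H^0(X,\widetilde E(p,q))\neq0\}$, $h_{\Gamma E}(p,q)=\dim H^0(X,\widetilde E(p,q))$. Klyachko filtrations: for a ray $\tau$ let $x^{\hat\tau}$ be the product of the variables of all rays other than $\tau$; the pieces of $E_{x^{\hat\tau}}$ of degree $\phi(m)=(\langle m,n(\tau')\rangle)_{\tau'}$ embed compatibly into a fixed $\mathbf E\cong\mathbb C^\ell$, and the image depends only on $i=\langle m,n(\tau)\rangle$; it is denoted $E^\tau(i)$, an increasing filtration of $\mathbb C^\ell$. For $\tau=\rho_t$ ($0\le t\le s$) write integers $i^t_1\le\dots\le i^t_\ell$ and subspaces $0\ne F^t_1\subseteq\dots\subseteq F^t_\ell=\mathbb C^\ell$ with $E^{\rho_t}(i)=0$ for $i<i^t_1$, $=F^t_n$ for $i^t_n\le i<i^t_{n+1}$, $=\mathbb C^\ell$ for $i\ge i^t_\ell$, and $i^t_n=i^t_{n+1}$ iff $F^t_n=F^t_{n+1}$; similarly for $\tau=\eta_u$ ($0\le u\le r$) with integers $j^u_n$ and subspaces $G^u_n$. Set $i^t_{\ell+1}=j^u_{\ell+1}=+\infty$. Known fact (Klyachko): $H^0(X,\widetilde E(p,q))=\bigoplus_{m\in M}H^0(X,\widetilde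 E(p,q))_m$ (torus weights) with $H^0(X,\widetilde E(p,q))_m\cong E^{\rho_0}(\langle m,n(\rho_0)\rangle+p)\cap\bigcap_{i=1}^sE^{\rho_i}(\langle m,n(\rho_i)\rangle)\cap E^{\eta_0}(\langle m,n(\eta_0)\rangle+q)\cap\bigcap_{j=1}^rE^{\eta_j}(\langle m,n(\eta_j)\rangle)$. *)

theory Defs
  imports "HOL-Analysis.Analysis"
begin

text \<open>The fixed vector space \<open>\<complex>^\<ell>\<close> is modelled as \<open>complex ^ 'n\<close> with \<open>\<ell> = CARD('n)\<close>.\<close>

definition klyachko_filtration :: "(int \<Rightarrow> (complex ^ 'n) set) \<Rightarrow> bool" where
  "klyachko_filtration V \<longleftrightarrow>
     (\<forall>i. vec.subspace (V i)) \<and> (\<forall>i j. i \<le> j \<longrightarrow> V i \<subseteq> V j) \<and>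
     (\<exists>i. V i = {0}) \<and> (\<exists>i. V i = UNIV)"

definition first_jump :: "(int \<Rightarrow> (complex ^ 'n) set) \<Rightarrow> int" where
  "first_jump V = (LEAST i. V i \<noteq> {0})"

definition last_jump :: "(int \<Rightarrow> (complex ^ 'n) set) \<Rightarrow> int" where
  "last_jump V = (LEAST i. V i = UNIV)"

text \<open>Torus-weight piece of \<open>H^0(X, E(p,q))\<close> at the character
\<open>m = (d_1,\<dots>,d_s, d_{s+1},\<dots>,d_{s+r})\<close>, where \<open>dr i = d_i\<close> (\<open>1\<le>i\<le>s\<close>) and
\<open>de j = d_{s+j}\<close> (\<open>1\<le>j\<le>r\<close>), via Klyachko's description.
\<open>F t\<close> is the filtration of ray \<open>\<rho>_t\<close>, \<open>G u\<close> that of ray \<open>\<eta>_u\<close>.\<close>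
definition H0_weight ::
  "nat \<Rightarrow> nat \<Rightarrow> (nat \<Rightarrow> int) \<Rightarrow> (nat \<Rightarrow> int \<Rightarrow> (complex ^ 'n) set) \<Rightarrow>
   (nat \<Rightarrow> int \<Rightarrow> (complex ^ 'n) set) \<Rightarrow> int \<Rightarrow> int \<Rightarrow> (nat \<Rightarrow> int) \<Rightarrow> (nat \<Rightarrow> int)
   \<Rightarrow> (complex ^ 'n) set" where
  "H0_weight s r a F G p q dr de =
     F 0 (- (\<Sum>i=1..s. dr i) + (\<Sum>j=1..r. a j * de j) + p)
     \<inter> (\<Inter>i\<in>{1..s}. F i (dr i))
     \<inter> G 0 (- (\<Sum>j=1..r. de j) + q)
     \<inter> (\<Inter>j\<in>{1..r}. G j (de j))"

definition H0_nonzero ::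
  "nat \<Rightarrow> nat \<Rightarrow> (nat \<Rightarrow> int) \<Rightarrow> (nat \<Rightarrow> int \<Rightarrow> (complex ^ 'n) set) \<Rightarrow>
   (nat \<Rightarrow> int \<Rightarrow> (complex ^ 'n) set) \<Rightarrow> int \<Rightarrow> int \<Rightarrow> bool" where
  "H0_nonzero s r a F G p q \<longleftrightarrow> (\<exists>dr de. H0_weight s r a F G p q dr de \<noteq> {0})"

definition I_region ::
  "nat \<Rightarrow> nat \<Rightarrow> (nat \<Rightarrow> int) \<Rightarrow> (nat \<Rightarrow> int \<Rightarrow> (complex ^ 'n) set) \<Rightarrow>
   (nat \<Rightarrow> int \<Rightarrow> (complex ^ 'n) set) \<Rightarrow> nat \<Rightarrow> (int \<times> int) set" where
  "I_region s r a F G k = {(p, q).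
     q \<ge> (\<Sum>u=0..r. last_jump (G u)) \<and>
     p + a r * q \<ge> (\<Sum>t\<in>{0..s} - {k}. last_jump (F t)) + first_jump (F k)
        + a r * last_jump (G 0) + (\<Sum>u=1..r-1. (a r - a u) * last_jump (G u))}"

definition J_region ::
  "nat \<Rightarrow> nat \<Rightarrow> (nat \<Rightarrow> int) \<Rightarrow> (nat \<Rightarrow> int \<Rightarrow> (complex ^ 'n) set) \<Rightarrow>
   (nat \<Rightarrow> int \<Rightarrow> (complex ^ 'n) set) \<Rightarrow> nat \<Rightarrow> (int \<times> int) set" where
  "J_region s r a F G k = (let jt = (\<lambda>u. if u = k then first_jump (G u) else last_jump (G u)) in
     {(p, q).
     q \<ge> (\<Sum>u=0..r. jt u) \<and>
     p + a r * q \<ge> (\<Sum>t=0..s. last_jump (F t))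
        + a r * jt 0 + (\<Sum>u=1..r-1. (a r - a u) * jt u)})"

definition U_region ::
  "nat \<Rightarrow> nat \<Rightarrow> (nat \<Rightarrow> int) \<Rightarrow> (nat \<Rightarrow> int \<Rightarrow> (complex ^ 'n) set) \<Rightarrow>
   (nat \<Rightarrow> int \<Rightarrow> (complex ^ 'n) set) \<Rightarrow> (int \<times> int) set" where
  "U_region s r a F G = (\<Union>k\<in>{0..s}. I_region s r a F G k) \<union> (\<Union>k\<in>{0..r}. J_region s r a F G k)"

end

theory Submission
  imports Defs
begin

text \<open>A vector \<open>v \<noteq> 0\<close> lying in every filtration from some threshold on spans a nonzero
torus-weight piece as soon as one can choose a character \<open>m\<close> putting all the
indices \<open>\<langle>m, n(\<tau>)\<rangle>\<close> (shifted by \<open>p\<close>, \<open>q\<close> for \<open>\<rho>_0\<close>, \<open>\<eta>_0\<close>) above the thresholds.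
Take \<open>d_i\<close> at the threshold of \<open>\<rho>_i\<close> and \<open>d_{s+j}\<close> at the threshold of \<open>\<eta>_j\<close> for
\<open>j < r\<close>, and put all the slack into \<open>d_{s+r}\<close>: the condition on \<open>q\<close> makes
\<open>d_{s+r}\<close> large enough, and the condition on \<open>p + a_r q\<close> is exactly what is left
for \<open>\<rho>_0\<close>. On \<open>I(k)\<close> one uses a nonzero vector of \<open>F^k_1\<close> with thresholds \<open>i^k_1\<close>
and \<open>i^t_\<ell>\<close>, \<open>j^u_\<ell>\<close> elsewhere (where the filtrations are everything);
on \<open>J(k)\<close> a nonzero vector of \<open>G^k_1\<close>.\<close>

lemma
  fixes P :: "int \<Rightarrow> bool"
  assumes "P y0" and bdd: "\<And>y. P y \<Longrightarrow> b \<le> y"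
  shows LeastI_int_bdd_below: "P (LEAST i. P i)"
    and Least_le_int_bdd_below: "P y \<Longrightarrow> (LEAST i. P i) \<le> y"
proof -
  define n where "n = (LEAST n::nat. P (b + int n))"
  have "P (b + int (nat (y0 - b)))"
    using \<open>P y0\<close> bdd[OF \<open>P y0\<close>] by simp
  then have Pn: "P (b + int n)"
    unfolding n_def by (rule LeastI)
  have min: "b + int n \<le> y" if "P y" for y
  proof -
    have "n \<le> nat (y - b)"
      unfolding n_def using \<open>P y\<close> bdd[OF that] by (intro Least_le) simp
    then show ?thesis using bdd[OF that] by linarith
  qed
  have Least_eq: "(LEAST i. P i) = b + int n"
    using Pn min by (intro Least_equality)
  show "P (LEAST i. P i)" using Pn Least_eq by simp
  show "P y \<Longrightarrow> (LEAST i. P i) \<le> y" using min Least_eq by simp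
qed

lemma UNIV_vec_neq_zero: "(UNIV :: ('a::zero_neq_one ^ 'n) set) \<noteq> {0}"
proof
  assume "(UNIV :: ('a ^ 'n) set) = {0}"
  then have "(\<chi> i. 1) = (0 :: 'a ^ 'n)" by blast
  then show False by (simp add: vec_eq_iff)
qed

lemma klyachko_filtration_mono:
  "klyachko_filtration V \<Longrightarrow> i \<le> j \<Longrightarrow> V i \<subseteq> V j"
  unfolding klyachko_filtration_def by blast

lemma klyachko_filtration_zero_below:
  assumes "klyachko_filtration V"
  obtains i0 where "\<And>y. y \<le> i0 \<Longrightarrow> V y = {0}"
proof -
  obtain i0 where i0: "V i0 = {0}"
    using assms unfolding klyachko_filtration_def by blast
  have "V y = {0}" if "y \<le> i0" for y
    using klyachko_filtration_mono[OF assms that] i0 assms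
    unfolding klyachko_filtration_def by (auto intro: vec.subspace_0)
  then show thesis by (rule that)
qed

lemma klyachko_filtration_last_jump:
  assumes V: "klyachko_filtration V" and "last_jump V \<le> x"
  shows "V x = UNIV"
proof -
  obtain i0 where zero: "\<And>y. y \<le> i0 \<Longrightarrow> V y = {0}"
    using klyachko_filtration_zero_below[OF V] by blast
  obtain i1 where "V i1 = UNIV"
    using V unfolding klyachko_filtration_def by blast
  moreover have "i0 \<le> y" if "V y = UNIV" for y
    using zero[of y] that UNIV_vec_neq_zero by fastforce
  ultimately have "V (last_jump V) = UNIV"
    unfolding last_jump_def by (rule LeastI_int_bdd_below)
  then show ?thesis
    using klyachko_filtration_mono[OF V \<open>last_jump V \<le> x\<close>] by blast
qed

lemma klyachko_filtration_first_jump: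
  assumes V: "klyachko_filtration V"
  obtains v where "v \<noteq> 0" and "\<And>x. first_jump V \<le> x \<Longrightarrow> v \<in> V x"
proof -
  obtain i0 where zero: "\<And>y. y \<le> i0 \<Longrightarrow> V y = {0}"
    using klyachko_filtration_zero_below[OF V] by blast
  obtain i1 where "V i1 = UNIV"
    using V unfolding klyachko_filtration_def by blast
  then have "V i1 \<noteq> {0}" using UNIV_vec_neq_zero by simp
  moreover have "i0 \<le> y" if "V y \<noteq> {0}" for y
    using zero[of y] that by fastforce
  ultimately have "V (first_jump V) \<noteq> {0}"
    unfolding first_jump_def by (rule LeastI_int_bdd_below)
  moreover have "0 \<in> V (first_jump V)"
    using V unfolding klyachko_filtration_def by (auto intro: vec.subspace_0)
  ultimately obtain v where "v \<in> V (first_jump V)" "v \<noteq> 0" by blast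
  then show thesis
    using that klyachko_filtration_mono[OF V] by blast
qed

lemma mem_H0_weight:
  assumes "v \<in> F 0 (- (\<Sum>i=1..s. dr i) + (\<Sum>j=1..r. a j * de j) + p)"
    and "\<And>i. 1 \<le> i \<Longrightarrow> i \<le> s \<Longrightarrow> v \<in> F i (dr i)"
    and "v \<in> G 0 (- (\<Sum>j=1..r. de j) + q)"
    and "\<And>j. 1 \<le> j \<Longrightarrow> j \<le> r \<Longrightarrow> v \<in> G j (de j)"
  shows "v \<in> H0_weight s r a F G p q dr de"
  using assms unfolding H0_weight_def by auto

lemma H0_nonzero_of_thresholds:
  fixes bF bG :: "nat \<Rightarrow> int" and v :: "complex ^ 'n"
    and F G :: "nat \<Rightarrow> int \<Rightarrow> (complex ^ 'n) set"
  assumes "r \<ge> 1" and "v \<noteq> 0"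
    and vF: "\<And>t x. t \<le> s \<Longrightarrow> bF t \<le> x \<Longrightarrow> v \<in> F t x"
    and vG: "\<And>u x. u \<le> r \<Longrightarrow> bG u \<le> x \<Longrightarrow> v \<in> G u x"
    and q_ge: "q \<ge> (\<Sum>u=0..r. bG u)"
    and p_ge: "p + a r * q \<ge> (\<Sum>t=0..s. bF t) + a r * bG 0 + (\<Sum>u=1..r-1. (a r - a u) * bG u)"
  shows "H0_nonzero s r a F G p q"
proof -
  obtain m where r: "r = Suc m" using \<open>r \<ge> 1\<close> by (cases r) auto
  define S where "S = (\<Sum>j=1..m. bG j)"
  define de where "de = (\<lambda>j. if j = r then q - bG 0 - S else bG j)"
  have sum_de: "(\<Sum>j=1..r. de j) = q - bG 0"
    unfolding r S_def de_def by (simp add: sum.cl_ivl_Suc)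
  have "bG r \<le> de r"
    using q_ge unfolding r S_def de_def by (simp add: sum.cl_ivl_Suc sum.atLeast_Suc_atMost)
  then have de_ge: "bG j \<le> de j" if "j \<le> r" for j
    using that unfolding de_def by auto
  have "(\<Sum>j=1..r. a j * de j) = a r * q - a r * bG 0 - (\<Sum>u=1..r-1. (a r - a u) * bG u)"
    unfolding r S_def de_def
    by (simp add: sum.cl_ivl_Suc sum_subtractf sum_distrib_left algebra_simps)
  moreover have "(\<Sum>t=0..s. bF t) = bF 0 + (\<Sum>i=1..s. bF i)"
    by (simp add: sum.atLeast_Suc_atMost)
  ultimately have "bF 0 \<le> - (\<Sum>i=1..s. bF i) + (\<Sum>j=1..r. a j * de j) + p"
    using p_ge by linarith
  then have "v \<in> H0_weight s r a F G p q bF de"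
    using sum_de de_ge by (intro mem_H0_weight vF vG) auto
  then show ?thesis
    unfolding H0_nonzero_def using \<open>v \<noteq> 0\<close> by blast
qed

lemma H0_nonzero_on_I_region:
  assumes "r \<ge> 1" and "k \<le> s"
    and F: "\<And>t. t \<le> s \<Longrightarrow> klyachko_filtration (F t)"
    and G: "\<And>u. u \<le> r \<Longrightarrow> klyachko_filtration (G u)"
    and "(p, q) \<in> I_region s r a F G k"
  shows "H0_nonzero s r a F G p q"
proof -
  obtain v where "v \<noteq> 0" and v: "\<And>x. first_jump (F k) \<le> x \<Longrightarrow> v \<in> F k x"
    using klyachko_filtration_first_jump[OF F[OF \<open>k \<le> s\<close>]] by blast
  define bF where "bF = (\<lambda>t. if t = k then first_jump (F k) else last_jump (F t))"
  have "(\<Sum>t=0..s. bF t) = (\<Sum>t\<in>{0..s} - {k}. last_jump (F t)) + first_jump (F k)"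
    using \<open>k \<le> s\<close> by (simp add: sum.remove[of "{0..s}" k] bF_def)
  moreover have "\<And>t x. t \<le> s \<Longrightarrow> bF t \<le> x \<Longrightarrow> v \<in> F t x"
    using v klyachko_filtration_last_jump[OF F] unfolding bF_def by (auto split: if_splits)
  ultimately show ?thesis
    using assms(1,5) \<open>v \<noteq> 0\<close> klyachko_filtration_last_jump[OF G]
    by (intro H0_nonzero_of_thresholds[where bF = bF and bG = "\<lambda>u. last_jump (G u)"])
       (auto simp: I_region_def)
qed

lemma H0_nonzero_on_J_region:
  assumes "r \<ge> 1" and "k \<le> r"
    and F: "\<And>t. t \<le> s \<Longrightarrow> klyachko_filtration (F t)"
    and G: "\<And>u. u \<le> r \<Longrightarrow> klyachko_filtration (G u)"
    and "(p, q) \<in> J_region s r a F G k"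
  shows "H0_nonzero s r a F G p q"
proof -
  obtain v where "v \<noteq> 0" and v: "\<And>x. first_jump (G k) \<le> x \<Longrightarrow> v \<in> G k x"
    using klyachko_filtration_first_jump[OF G[OF \<open>k \<le> r\<close>]] by blast
  define bG where "bG = (\<lambda>u. if u = k then first_jump (G u) else last_jump (G u))"
  have "\<And>u x. u \<le> r \<Longrightarrow> bG u \<le> x \<Longrightarrow> v \<in> G u x"
    using v klyachko_filtration_last_jump[OF G] unfolding bG_def by (auto split: if_splits)
  then show ?thesis
    using assms(1,5) \<open>v \<noteq> 0\<close> klyachko_filtration_last_jump[OF F]
    by (intro H0_nonzero_of_thresholds[where bF = "\<lambda>t. last_jump (F t)" and bG = bG])
       (auto simp: J_region_def bG_def Let_def)
qed

theorem mainTheorem7: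
  fixes s r :: nat and a :: "nat \<Rightarrow> int"
    and F G :: "nat \<Rightarrow> int \<Rightarrow> (complex ^ 'n) set" and p q :: int
  assumes "s \<ge> 1" and "r \<ge> 1"
    and "0 \<le> a 1" and "\<And>j k. 1 \<le> j \<Longrightarrow> j \<le> k \<Longrightarrow> k \<le> r \<Longrightarrow> a j \<le> a k"
    and "\<And>t. t \<le> s \<Longrightarrow> klyachko_filtration (F t)"
    and "\<And>u. u \<le> r \<Longrightarrow> klyachko_filtration (G u)"
    and "(p, q) \<in> U_region s r a F G"
  shows "H0_nonzero s r a F G p q"
proof -
  from \<open>(p, q) \<in> U_region s r a F G\<close>
  consider (I) k where "k \<le> s" "(p, q) \<in> I_region s r a F G k"
    | (J) k where "k \<le> r" "(p, q) \<in> J_region s r a F G k"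
    unfolding U_region_def by auto
  then show ?thesis
  proof cases
    case I
    show ?thesis by (rule H0_nonzero_on_I_region[OF assms(2) I(1) assms(5,6) I(2)])
  next
    case J
    show ?thesis by (rule H0_nonzero_on_J_region[OF assms(2) J(1) assms(5,6) J(2)])
  qed
qed

end
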